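(* Let $A$ be a power bounded linear operator of a Banach space $X$, i.e. $\sup_{k\ge0}\|A^k\|<\infty$. Let $\|x\|_1:=\sup_{k\geq0}\|A^{k}x\|$ for $x\in X$. Then for any $v\in X$ there is a metric functional $h$ of $X$ equipped with the metric $d_1(x,y)=\|x-y\|_1$ and base point $0$, such that \[ h\Big(\sum_{k=0}^{n-1}A^{k}v\Big)\leq-n\tau\quad\text{for all }n>0, \] where $\tau=\inf_{x\in X}\|Ax+v-x\|_1$.
   Context: For a metric space $(X,d_1)$ with base point $0$, let $\mathrm{Hom}(X,\mathbb{R})$ be the set of $1$-Lipschitz functions $X\to\mathbb{R}$ with the topology of pointwise convergence and $h_y(\cdot)=d_1(\cdot,y)-d_1(0,y)$. A metric functional is an element of the closure of $\{h_y:y\in X\}$ in $\mathrm{Hom}(X,\mathbb{R})$. *)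

theory Defs
  imports "HOL-Analysis.Analysis"
begin

definition lip1 :: "('a \<Rightarrow> 'a \<Rightarrow> real) \<Rightarrow> ('a \<Rightarrow> real) \<Rightarrow> bool" where
  "lip1 d f \<longleftrightarrow> (\<forall>x y. \<bar>f x - f y\<bar> \<le> d x y)"

definition horofun :: "('a \<Rightarrow> 'a \<Rightarrow> real) \<Rightarrow> 'a \<Rightarrow> 'a \<Rightarrow> ('a \<Rightarrow> real)" where
  "horofun d x0 y = (\<lambda>x. d x y - d x0 y)"

text \<open>Metric functional: element of Hom(X,R) in the closure of {h_y} for the
  topology of pointwise convergence (product topology on 'a => real).\<close>
definition metric_functional :: "('a \<Rightarrow> 'a \<Rightarrow> real) \<Rightarrow> 'a \<Rightarrow> ('a \<Rightarrow> real) \<Rightarrow> bool" where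
  "metric_functional d x0 h \<longleftrightarrow> lip1 d h \<and> h \<in> closure (range (horofun d x0))"

definition power_bounded :: "('a::real_normed_vector \<Rightarrow> 'a) \<Rightarrow> bool" where
  "power_bounded A \<longleftrightarrow> bdd_above (range (\<lambda>k. onorm (A ^^ k)))"

definition norm1 :: "('a::real_normed_vector \<Rightarrow> 'a) \<Rightarrow> 'a \<Rightarrow> real" where
  "norm1 A x = (SUP k. norm ((A ^^ k) x))"

end

(*
  Let S n = (\<Sum>k<n. A^k v) be the orbit of 0 under the affine map T x = A x + v and tau
  its minimal displacement for the norm ||x||_1 = sup_k ||A^k x||. Testing tau at the
  Cesaro mean (1/n) (\<Sum>j<n. S j), which T moves by S n / n, gives ||S n||_1 \<ge> n tau.
  Hence b m = ||S m||_1 - m tau is nonnegative, so for every N and e > 0 some m \<ge> N has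
  b (m - k) \<le> b m + e for all k \<le> N. As A does not increase ||.||_1 and
  S m = S n + A^n (S (m - n)), the horofunction of S m satisfies
  h(S n) \<le> ||S (m - n)||_1 - ||S m||_1 \<le> - n tau + e for n \<le> N. The closure of all
  horofunctions is compact in the product topology (Tychonoff, since |h x| \<le> d(x, 0)), so
  by the finite intersection property one of its points satisfies h(S n) \<le> - n tau for all n.
*)
theory Submission
  imports Defs
begin

lemma closed_lip1: "closed {f. lip1 d f}"
  unfolding lip1_def
  by (intro closed_Collect_all closed_Collect_le continuous_on_const continuous_intros
      continuous_on_product_coordinates)

lemma compact_lip1_vanishing: "compact {f. lip1 d f \<and> f x0 = 0}"
proof -
  define B where "B = {f :: 'a \<Rightarrow> real. \<forall>x. -d x x0 \<le> f x \<and> f x \<le> d x x0}"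
  have "B = Pi\<^sub>E UNIV (\<lambda>x. {-d x x0..d x x0})"
    by (auto simp: B_def PiE_UNIV_domain Pi_def)
  moreover have "compactin (product_topology (\<lambda>_. euclidean) UNIV) (Pi\<^sub>E UNIV (\<lambda>x. {-d x x0..d x x0}))"
    by (simp add: compactin_PiE compactin_euclidean_iff)
  ultimately have "compact B"
    by (simp add: euclidean_product_topology compactin_euclidean_iff)
  moreover have "closed {f. lip1 d f \<and> f x0 = 0}"
    by (intro closed_Collect_conj closed_lip1 closed_Collect_eq continuous_on_const
        continuous_on_product_coordinates)
  moreover have "{f. lip1 d f \<and> f x0 = 0} \<subseteq> B"
  proof (clarsimp simp: B_def)
    fix f :: "'a \<Rightarrow> real" and x assume "lip1 d f" "f x0 = 0"
    then have "\<bar>f x\<bar> \<le> d x x0"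
      unfolding lip1_def by (metis diff_zero)
    then show "- d x x0 \<le> f x \<and> f x \<le> d x x0"
      by linarith
  qed
  ultimately show ?thesis
    by (metis Int_absorb1 compact_Int_closed inf_commute)
qed

lemma lip1_horofun:
  assumes triangle: "\<And>x y z. d x z \<le> d x y + d y z" and sym: "\<And>x y. d x y = d y x"
  shows "lip1 d (horofun d x0 y)"
  unfolding lip1_def horofun_def
proof (intro allI)
  fix x z
  show "\<bar>(d x y - d x0 y) - (d z y - d x0 y)\<bar> \<le> d x z"
    using triangle[of x y z] triangle[of z y x] sym[of z x] by (simp add: abs_le_iff)
qed

lemma horofun_base [simp]: "horofun d x0 y x0 = 0"
  by (simp add: horofun_def)

lemma
  assumes triangle: "\<And>x y z. d x z \<le> d x y + d y z" and sym: "\<And>x y. d x y = d y x"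
  shows compact_closure_horofun: "compact (closure (range (horofun d x0)))"
    and metric_functional_iff_closure_horofun:
      "metric_functional d x0 h \<longleftrightarrow> h \<in> closure (range (horofun d x0))"
proof -
  have sub: "closure (range (horofun d x0)) \<subseteq> {f. lip1 d f \<and> f x0 = 0}"
    using lip1_horofun[of d, OF triangle sym]
    by (intro closure_minimal closed_Collect_conj closed_lip1 closed_Collect_eq
        continuous_on_const continuous_on_product_coordinates) auto
  then show "compact (closure (range (horofun d x0)))"
    by (metis Int_absorb1 closed_closure compact_Int_closed compact_lip1_vanishing)
  show "metric_functional d x0 h \<longleftrightarrow> h \<in> closure (range (horofun d x0))"
    using sub by (auto simp: metric_functional_def)
qed

lemma finite_pairs_bounded:
  fixes J :: "(nat \<times> real) set"
  assumes "finite J" "J \<subseteq> UNIV \<times> {0<..}"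
  shows "\<exists>N e. e > 0 \<and> (\<forall>(n, e')\<in>J. n \<le> N \<and> e \<le> e')"
  using assms
proof (induction J rule: finite_induct)
  case empty
  show ?case by (intro exI[of _ 0] exI[of _ 1]) simp
next
  case (insert p J)
  then obtain N e where "e > 0" "\<forall>(n, e')\<in>J. n \<le> N \<and> e \<le> e'"
    by auto
  with insert.prems show ?case
    by (intro exI[of _ "max N (fst p)"] exI[of _ "min e (snd p)"]) auto
qed

lemma metric_functional_exists:
  fixes d :: "'a \<Rightarrow> 'a \<Rightarrow> real" and p :: "nat \<Rightarrow> 'a" and c :: "nat \<Rightarrow> real"
  assumes triangle: "\<And>x y z. d x z \<le> d x y + d y z" and sym: "\<And>x y. d x y = d y x"
    and approx: "\<And>N e. e > 0 \<Longrightarrow> \<exists>y. \<forall>n\<le>N. horofun d x0 y (p n) \<le> c n + e"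
  shows "\<exists>h. metric_functional d x0 h \<and> (\<forall>n. h (p n) \<le> c n)"
proof -
  define F where "F = (\<lambda>(n, e). {h :: 'a \<Rightarrow> real. h (p n) \<le> c n + e})"
  have "closure (range (horofun d x0)) \<inter> (\<Inter>i\<in>UNIV \<times> {0<..}. F i) \<noteq> {}"
  proof (rule compact_imp_fip_image[OF compact_closure_horofun[of d, OF triangle sym]])
    show "closed (F i)" for i
      by (cases i) (simp add: F_def closed_Collect_le continuous_on_const
          continuous_on_product_coordinates)
  next
    fix J :: "(nat \<times> real) set" assume "finite J" "J \<subseteq> UNIV \<times> {0<..}"
    then obtain N e where "e > 0" and bounds: "\<forall>(n, e')\<in>J. n \<le> N \<and> e \<le> e'"
      by (metis finite_pairs_bounded)
    then obtain y where y: "\<forall>n\<le>N. horofun d x0 y (p n) \<le> c n + e"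
      by (metis approx)
    have "horofun d x0 y \<in> F i" if "i \<in> J" for i
    proof (cases i)
      case (Pair n e')
      with bounds that have "n \<le> N" "e \<le> e'"
        by auto
      with y show ?thesis
        by (fastforce simp: F_def Pair)
    qed
    moreover have "horofun d x0 y \<in> closure (range (horofun d x0))"
      by (meson closure_subset rangeI subsetD)
    ultimately show "closure (range (horofun d x0)) \<inter> (\<Inter>i\<in>J. F i) \<noteq> {}"
      by blast
  qed
  then obtain h where h: "h \<in> closure (range (horofun d x0))"
    and hF: "\<And>i. i \<in> UNIV \<times> {0<..} \<Longrightarrow> h \<in> F i"
    by blast
  have bound: "h (p n) \<le> c n" for n
  proof (rule field_le_epsilon)
    fix e :: real assume "e > 0"
    then show "h (p n) \<le> c n + e"
      using hF[of "(n, e)"] by (simp add: F_def)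
  qed
  show ?thesis
    using h bound metric_functional_iff_closure_horofun[of d, OF triangle sym] by blast
qed

lemma descending_windows_growth:
  fixes b :: "nat \<Rightarrow> real"
  assumes descent: "\<And>m. m \<ge> N \<Longrightarrow> \<exists>k\<le>N. b m + e < b (m - k)"
    and "N > 0" and "e > 0"
  shows "b m + e * real (m div N) \<le> Max (b ` {..<N})"
proof (induction m rule: less_induct)
  case (less m)
  show ?case
  proof (cases "m < N")
    case True
    then show ?thesis by simp
  next
    case False
    then obtain k where "k \<le> N" and k: "b m + e < b (m - k)"
      using descent by (meson not_le)
    then have "k \<noteq> 0"
      using \<open>e > 0\<close> by (metis add_less_same_cancel1 diff_zero not_less_iff_gr_or_eq)
    then have "m - k < m"
      using \<open>N > 0\<close> False by simp
    then have IH: "b (m - k) + e * real ((m - k) div N) \<le> Max (b ` {..<N})"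
      using less by blast
    have "m div N = Suc ((m - N) div N)"
      using False \<open>N > 0\<close> by (simp add: le_div_geq)
    also have "(m - N) div N \<le> (m - k) div N"
      using \<open>k \<le> N\<close> by (simp add: div_le_mono)
    finally have "e * real (m div N) \<le> e * (real ((m - k) div N) + 1)"
      using \<open>e > 0\<close> by (simp add: mult_left_mono)
    then show ?thesis
      using IH k by (simp add: distrib_left)
  qed
qed

lemma nonneg_seq_window_almost_max:
  fixes b :: "nat \<Rightarrow> real"
  assumes nonneg: "\<And>m. b m \<ge> 0" and "e > 0"
  shows "\<exists>m\<ge>N. \<forall>k\<le>N. b (m - k) \<le> b m + e"
proof (rule ccontr)
  assume "\<not> ?thesis"
  then have descent: "\<exists>k\<le>N. b m + e < b (m - k)" if "m \<ge> N" for m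
    using that by (meson not_le)
  have "N > 0"
    using descent[of N] \<open>e > 0\<close> by (cases N) auto
  obtain K :: nat where "Max (b ` {..<N}) < real K * e"
    using ex_less_of_nat_mult[OF \<open>e > 0\<close>] by blast
  then have "b (N * K) < 0"
    using descending_windows_growth[OF descent \<open>N > 0\<close> \<open>e > 0\<close>, of "N * K"] \<open>N > 0\<close>
    by (simp add: mult.commute)
  with nonneg show False
    by (meson not_le)
qed

lemma norm1_le:
  assumes "\<And>k. norm ((A ^^ k) x) \<le> M"
  shows "norm1 A x \<le> M"
  unfolding norm1_def using assms by (rule cSUP_least[OF UNIV_not_empty])

lemma bounded_linear_funpow:
  fixes A :: "'a::real_normed_vector \<Rightarrow> 'a"
  assumes "bounded_linear A"
  shows "bounded_linear (A ^^ k)"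
proof (induction k)
  case 0
  show ?case by (simp add: bounded_linear_ident[unfolded id_def[symmetric]])
next
  case (Suc k)
  then show ?case
    using bounded_linear_compose[OF assms] by (simp add: comp_def)
qed

definition orbit_sum :: "('a::real_normed_vector \<Rightarrow> 'a) \<Rightarrow> 'a \<Rightarrow> nat \<Rightarrow> 'a" where
  "orbit_sum A v n = (\<Sum>k<n. (A ^^ k) v)"

lemma orbit_sum_0 [simp]: "orbit_sum A v 0 = 0"
  by (simp add: orbit_sum_def)

lemma orbit_sum_Suc_right: "orbit_sum A v (Suc n) = orbit_sum A v n + (A ^^ n) v"
  by (simp add: orbit_sum_def)

definition min_displacement :: "('a::real_normed_vector \<Rightarrow> 'a) \<Rightarrow> 'a \<Rightarrow> real" where
  "min_displacement A v = (INF x. norm1 A (A x + v - x))"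

locale power_bounded_operator =
  fixes A :: "'a::real_normed_vector \<Rightarrow> 'a"
  assumes bounded_linear: "bounded_linear A"
    and power_bounded: "power_bounded A"
begin

lemma linear_funpow: "linear (A ^^ k)"
  using bounded_linear_funpow[OF bounded_linear] by (rule bounded_linear.linear)

lemma norm_funpow_le_norm1: "norm ((A ^^ k) x) \<le> norm1 A x"
proof -
  obtain M where M: "\<And>k. onorm (A ^^ k) \<le> M"
    using power_bounded unfolding power_bounded_def bdd_above_def by blast
  have "norm ((A ^^ k) x) \<le> M * norm x" for k
    using onorm[OF bounded_linear_funpow[OF bounded_linear]] M
    by (meson mult_right_mono norm_ge_zero order_trans)
  then have "bdd_above (range (\<lambda>k. norm ((A ^^ k) x)))"
    by (rule bdd_aboveI2)
  then show ?thesis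
    unfolding norm1_def by (rule cSUP_upper[OF UNIV_I])
qed

lemma norm1_nonneg: "0 \<le> norm1 A x"
  using norm_ge_zero norm_funpow_le_norm1 by (rule order_trans)

lemma norm1_triangle: "norm1 A (x + y) \<le> norm1 A x + norm1 A y"
proof (rule norm1_le)
  fix k
  have "norm ((A ^^ k) (x + y)) \<le> norm ((A ^^ k) x) + norm ((A ^^ k) y)"
    using linear_add[OF linear_funpow] norm_triangle_ineq by metis
  also have "\<dots> \<le> norm1 A x + norm1 A y"
    by (intro add_mono norm_funpow_le_norm1)
  finally show "norm ((A ^^ k) (x + y)) \<le> norm1 A x + norm1 A y" .
qed

lemma norm1_minus: "norm1 A (- x) = norm1 A x"
  unfolding norm1_def by (simp add: linear_neg[OF linear_funpow])

lemma norm1_scaleR_le: "norm1 A (c *\<^sub>R x) \<le> \<bar>c\<bar> * norm1 A x"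
proof (rule norm1_le)
  fix k
  have "norm ((A ^^ k) (c *\<^sub>R x)) = \<bar>c\<bar> * norm ((A ^^ k) x)"
    by (simp add: linear_scale[OF linear_funpow])
  also have "\<dots> \<le> \<bar>c\<bar> * norm1 A x"
    by (intro mult_left_mono norm_funpow_le_norm1) simp
  finally show "norm ((A ^^ k) (c *\<^sub>R x)) \<le> \<bar>c\<bar> * norm1 A x" .
qed

lemma norm1_funpow_le: "norm1 A ((A ^^ j) x) \<le> norm1 A x"
proof (rule norm1_le)
  fix k
  show "norm ((A ^^ k) ((A ^^ j) x)) \<le> norm1 A x"
    using norm_funpow_le_norm1[of "k + j" x] by (simp add: funpow_add)
qed

lemma norm1_diff_triangle: "norm1 A (x - z) \<le> norm1 A (x - y) + norm1 A (y - z)"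
  using norm1_triangle[of "x - y" "y - z"] by simp

lemma norm1_diff_commute: "norm1 A (x - y) = norm1 A (y - x)"
  using norm1_minus[of "x - y"] by simp

lemma orbit_sum_add: "orbit_sum A v (k + j) = orbit_sum A v k + (A ^^ k) (orbit_sum A v j)"
proof (induction j)
  case 0
  show ?case by (simp add: linear_0[OF linear_funpow])
next
  case (Suc j)
  have "orbit_sum A v (k + Suc j) = orbit_sum A v (k + j) + (A ^^ k) ((A ^^ j) v)"
    by (simp add: orbit_sum_Suc_right funpow_add)
  also have "\<dots> = orbit_sum A v k + (A ^^ k) (orbit_sum A v (Suc j))"
    by (simp add: Suc orbit_sum_Suc_right linear_add[OF linear_funpow])
  finally show ?case .
qed

lemma orbit_sum_Suc: "orbit_sum A v (Suc j) = A (orbit_sum A v j) + v"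
  using orbit_sum_add[where k=1 and j=j] by (simp add: orbit_sum_Suc_right add.commute)

lemma orbit_sum_telescope:
  "A (\<Sum>j<n. orbit_sum A v j) + real n *\<^sub>R v - (\<Sum>j<n. orbit_sum A v j) = orbit_sum A v n"
proof -
  have "A (\<Sum>j<n. orbit_sum A v j) + real n *\<^sub>R v = (\<Sum>j<n. orbit_sum A v (Suc j))"
    by (simp add: orbit_sum_Suc linear_sum[OF bounded_linear.linear[OF bounded_linear]]
        sum.distrib sum_constant_scaleR)
  then show ?thesis
    by (simp add: sum_subtractf[symmetric] sum_lessThan_telescope)
qed

lemma min_displacement_le: "min_displacement A v \<le> norm1 A (A x + v - x)"
  unfolding min_displacement_def
  by (rule cINF_lower) (auto intro: bdd_belowI2 norm1_nonneg)

lemma norm1_orbit_sum_ge: "real n * min_displacement A v \<le> norm1 A (orbit_sum A v n)"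
proof (cases "n = 0")
  case True
  then show ?thesis by (simp add: norm1_nonneg)
next
  case False
  define x where "x = (1 / real n) *\<^sub>R (\<Sum>j<n. orbit_sum A v j)"
  have "A x + v - x
      = (1 / real n) *\<^sub>R (A (\<Sum>j<n. orbit_sum A v j) + real n *\<^sub>R v - (\<Sum>j<n. orbit_sum A v j))"
    using False
    by (simp add: x_def linear_scale[OF bounded_linear.linear[OF bounded_linear]] algebra_simps)
  also have "\<dots> = (1 / real n) *\<^sub>R orbit_sum A v n"
    by (simp only: orbit_sum_telescope)
  finally have "A x + v - x = (1 / real n) *\<^sub>R orbit_sum A v n" .
  then have "min_displacement A v \<le> norm1 A (orbit_sum A v n) / real n"
    using min_displacement_le[of v x] norm1_scaleR_le[of "1 / real n" "orbit_sum A v n"] by simp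
  with False show ?thesis
    by (simp add: field_simps)
qed

lemma horofun_orbit_sum_le:
  assumes "n \<le> m"
  shows "horofun (\<lambda>x y. norm1 A (x - y)) 0 (orbit_sum A v m) (orbit_sum A v n)
    \<le> norm1 A (orbit_sum A v (m - n)) - norm1 A (orbit_sum A v m)"
proof -
  have "orbit_sum A v m = orbit_sum A v n + (A ^^ n) (orbit_sum A v (m - n))"
    using orbit_sum_add[where k=n and j="m - n"] assms by simp
  then have "norm1 A (orbit_sum A v n - orbit_sum A v m) = norm1 A ((A ^^ n) (orbit_sum A v (m - n)))"
    using norm1_minus by simp
  also have "\<dots> \<le> norm1 A (orbit_sum A v (m - n))"
    by (rule norm1_funpow_le)
  finally show ?thesis
    by (simp add: horofun_def norm1_minus)
qed

lemma horofun_orbit_sums_approx: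
  assumes "e > 0"
  shows "\<exists>y. \<forall>n\<le>N. horofun (\<lambda>x y. norm1 A (x - y)) 0 y (orbit_sum A v n)
    \<le> - real n * min_displacement A v + e"
proof -
  define b where "b m = norm1 A (orbit_sum A v m) - real m * min_displacement A v" for m
  have "b m \<ge> 0" for m
    using norm1_orbit_sum_ge by (simp add: b_def)
  then obtain m where "m \<ge> N" and window: "\<And>k. k \<le> N \<Longrightarrow> b (m - k) \<le> b m + e"
    using nonneg_seq_window_almost_max assms by blast
  have "horofun (\<lambda>x y. norm1 A (x - y)) 0 (orbit_sum A v m) (orbit_sum A v n)
      \<le> - real n * min_displacement A v + e" if "n \<le> N" for n
  proof -
    have "horofun (\<lambda>x y. norm1 A (x - y)) 0 (orbit_sum A v m) (orbit_sum A v n)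
        \<le> norm1 A (orbit_sum A v (m - n)) - norm1 A (orbit_sum A v m)"
      using horofun_orbit_sum_le that \<open>m \<ge> N\<close> by simp
    also have "\<dots> = b (m - n) - b m - real n * min_displacement A v"
      using that \<open>m \<ge> N\<close> by (simp add: b_def of_nat_diff algebra_simps)
    also have "\<dots> \<le> - real n * min_displacement A v + e"
      using window[OF that] by simp
    finally show ?thesis .
  qed
  then show ?thesis
    by blast
qed

end

theorem corollary18:
  fixes A :: "'a::banach \<Rightarrow> 'a" and v :: 'a
  assumes "bounded_linear A"
    and "power_bounded A"
  shows "\<exists>h. metric_functional (\<lambda>x y. norm1 A (x - y)) 0 h \<and>
     (\<forall>n::nat. n > 0 \<longrightarrow>
        h (\<Sum>k<n. (A ^^ k) v) \<le> - real n * (INF x. norm1 A (A x + v - x)))"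
proof -
  interpret power_bounded_operator A
    using assms by (rule power_bounded_operator.intro)
  have "\<exists>h. metric_functional (\<lambda>x y. norm1 A (x - y)) 0 h \<and>
      (\<forall>n. h (orbit_sum A v n) \<le> - real n * min_displacement A v)"
    by (rule metric_functional_exists[where d = "\<lambda>x y. norm1 A (x - y)",
          OF norm1_diff_triangle norm1_diff_commute horofun_orbit_sums_approx])
  then show ?thesis
    unfolding orbit_sum_def min_displacement_def by blast
qed

end
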